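(* For every fixed integer $k\ge 1$ there exists a constant $C_k$ such that the following holds: for every integer $d\ge k$ and every polynomial $P(x)=\sum_{n=0}^d a_nx^n$ with real coefficients and $\|P\|_{[-1,1]}\le 1$, the polynomial $P_{\ge k}(x)=\sum_{n=0}^{d-k}a_{n+k}x^n$ satisfies $$\|P_{\ge k}\|_{[-1,1]}\le C_k\, d^{k}\sqrt{d}.$$ (The paper states this as $\|P_{\ge k}\|_{[-1,1]}\le O\big(\tfrac{d^k}{k!}\sqrt{d/k}\big)$, in particular polynomial in $d$.)
   Context: For a function $f$ on $[-1,1]$, $\|f\|_{[-1,1]}:=\max_{x\in[-1,1]}|f(x)|$. The polynomial $P_{\ge k}$ is the "high-order constituent polynomial" of $P$, defined by the decomposition $P(x)=\sum_{n=0}^{k-1}a_nx^n+x^kP_{\ge k}(x)$. *)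

theory Defs
  imports "HOL-Analysis.Analysis" "HOL-Computational_Algebra.Polynomial"
begin

definition sup_norm_11 :: "(real \<Rightarrow> real) \<Rightarrow> real" where
  "sup_norm_11 f = (SUP x\<in>{-1..1}. \<bar>f x\<bar>)"

definition high_part :: "nat \<Rightarrow> real poly \<Rightarrow> real poly" where
  "high_part k P = Abs_poly (\<lambda>n. coeff P (n + k))"

end

theory Submission
  imports Defs
begin

text \<open>Write P = \<Sum>_(m \<le> d) c_m T_m in the Chebyshev basis. At the d + 1 Chebyshev nodes the
  T_m are orthogonal, so evaluating there gives \<Sum> c_m^2 \<le> 2 and, by Cauchy-Schwarz,
  \<Sum> \<bar>c_m\<bar> \<le> 2\<surd>d. As high_part k is linear, it remains to bound high_part k T_m by
  C_k (m + 1)^k on [-1, 1]. For \<bar>x\<bar> \<ge> 1/2 this follows from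
  T_m(x) = \<Sum>_(j < k) a_j x^j + x^k (high_part k T_m)(x) once the coefficients satisfy
  \<bar>a_j\<bar> = O(m^j). As a_j is the value of high_part j T_m at 0, this is the case x = 0 of the
  bound for \<bar>x\<bar> \<le> 1/2, which is proved by induction on k: u_m = (high_part (k + 1) T_m)(x)
  satisfies the Chebyshev recurrence perturbed by 2 a_k(T_(m+1)), and the square root of the
  quadratic form u_(m+1)^2 - 2x u_(m+1) u_m + u_m^2, which the unperturbed recurrence preserves,
  grows by at most the size of each perturbation.\<close>

lemma coeff_high_part [simp]: "coeff (high_part k P) n = coeff P (n + k)"
proof -
  have "coeff (Abs_poly (\<lambda>n. coeff P (n + k))) = (\<lambda>n. coeff P (n + k))"
    by (rule coeff_Abs_poly[where n = "degree P"]) (simp add: coeff_eq_0)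
  then show ?thesis
    by (simp add: high_part_def)
qed

lemma high_part_0 [simp]: "high_part 0 P = P"
  by (rule poly_eqI) simp

lemma high_part_diff: "high_part k (P - Q) = high_part k P - high_part k Q"
  by (rule poly_eqI) simp

lemma high_part_smult: "high_part k (smult c P) = smult c (high_part k P)"
  by (rule poly_eqI) simp

lemma high_part_sum: "high_part k (\<Sum>m\<in>A. f m) = (\<Sum>m\<in>A. high_part k (f m))"
  by (rule poly_eqI) (simp add: coeff_sum)

lemma high_part_pCons_Suc [simp]: "high_part (Suc k) (pCons a P) = high_part k P"
  by (rule poly_eqI) simp

lemma high_part_eq_pCons: "high_part k P = pCons (coeff P k) (high_part (Suc k) P)"
  by (rule poly_eqI) (simp add: coeff_pCons split: nat.split)

lemma poly_high_part_0: "poly (high_part k P) 0 = coeff P k"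
  by (simp add: poly_0_coeff_0)

lemma poly_high_part_step:
  "poly (high_part k P) x = coeff P k + x * poly (high_part (Suc k) P) x"
  by (subst high_part_eq_pCons) simp

lemma poly_eq_low_part_plus_high_part:
  "poly P x = (\<Sum>j<k. coeff P j * x ^ j) + x ^ k * poly (high_part k P) x"
proof (induction k)
  case (Suc k)
  then show ?case
    unfolding poly_high_part_step[of k] by (simp add: algebra_simps)
qed simp

fun cheb_poly :: "nat \<Rightarrow> real poly" where
  "cheb_poly 0 = 1"
| "cheb_poly (Suc 0) = [:0, 1:]"
| "cheb_poly (Suc (Suc m)) = pCons 0 (smult 2 (cheb_poly (Suc m))) - cheb_poly m"

lemma poly_cheb_poly_cos: "poly (cheb_poly m) (cos t) = cos (real m * t)"
proof (induction m rule: cheb_poly.induct)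
  case (3 m)
  have "cos (real (Suc (Suc m)) * t) + cos (real m * t) = 2 * cos t * cos (real (Suc m) * t)"
    using cos_times_cos[of t "real (Suc m) * t"] by (simp add: algebra_simps)
  with 3 show ?case
    by simp
qed simp_all

lemma abs_poly_cheb_poly_le_1: "\<bar>x\<bar> \<le> 1 \<Longrightarrow> \<bar>poly (cheb_poly m) x\<bar> \<le> 1"
  using poly_cheb_poly_cos[of m "arccos x"] by (simp add: cos_arccos_abs)

lemma degree_cheb_poly_le: "degree (cheb_poly m) \<le> m"
  by (induction m rule: cheb_poly.induct)
    (auto intro!: degree_diff_le le_trans[OF degree_smult_le] simp: degree_pCons_le)

lemma coeff_cheb_poly_self: "coeff (cheb_poly m) m = (if m = 0 then 1 else 2 ^ (m - 1))"
proof (induction m rule: cheb_poly.induct)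
  case (3 m)
  have "coeff (cheb_poly m) (Suc (Suc m)) = 0"
    using degree_cheb_poly_le[of m] by (simp add: coeff_eq_0)
  with 3 show ?case
    by simp
qed simp_all

lemma cheb_poly_expansion:
  "degree P \<le> d \<Longrightarrow> \<exists>c. P = (\<Sum>m\<le>d. smult (c m) (cheb_poly m))"
proof (induction d arbitrary: P)
  case 0
  then have "P = smult (coeff P 0) (cheb_poly 0)"
    by (simp add: degree_0_id)
  then show ?case
    by auto
next
  case (Suc d)
  define a where "a = coeff P (Suc d) / coeff (cheb_poly (Suc d)) (Suc d)"
  define P' where "P' = P - smult a (cheb_poly (Suc d))"
  have "degree P' \<le> Suc d"
    unfolding P'_def using Suc.prems degree_cheb_poly_le[of "Suc d"]
    by (metis degree_diff_le degree_smult_le le_trans)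
  moreover have "coeff P' (Suc d) = 0"
    by (simp add: P'_def a_def coeff_cheb_poly_self)
  ultimately have "degree P' \<le> d"
    by (intro degree_le allI impI) (metis Suc_lessI coeff_eq_0 le_less_trans)
  then obtain c where c: "P' = (\<Sum>m\<le>d. smult (c m) (cheb_poly m))"
    using Suc.IH by blast
  have "(\<Sum>m\<le>d. smult ((c(Suc d := a)) m) (cheb_poly m)) = P'"
    unfolding c by (rule sum.cong) auto
  then have "P = (\<Sum>m\<le>Suc d. smult ((c(Suc d := a)) m) (cheb_poly m))"
    by (simp add: P'_def)
  then show ?case
    by blast
qed

definition cheb_node :: "nat \<Rightarrow> nat \<Rightarrow> real" where
  "cheb_node N l = (2 * real l + 1) * pi / (2 * real N)"

lemma sum_cos_cheb_nodes_nat: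
  assumes "0 < j" "j < 2 * N"
  shows "(\<Sum>l<N. cos (real j * cheb_node N l)) = 0"
proof -
  define a where "a = real j * pi / (2 * real N)"
  define s where "s l = sin (real j * real l * pi / real N)" for l :: nat
  have "sin a > 0"
    unfolding a_def using assms by (intro sin_gt_zero) (auto simp: field_simps)
  \<comment> \<open>multiplied by \<open>2 sin a\<close>, the sum telescopes\<close>
  have "2 * sin a * cos (real j * cheb_node N l) = s (Suc l) - s l" for l
  proof -
    have "real j * real (Suc l) * pi / real N = real j * cheb_node N l + a"
      and "real j * real l * pi / real N = real j * cheb_node N l - a"
      using assms by (simp_all add: cheb_node_def a_def field_simps)
    then show ?thesis
      unfolding s_def by (simp add: sin_add sin_diff)
  qed
  then have "2 * sin a * (\<Sum>l<N. cos (real j * cheb_node N l)) = s N - s 0"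
    by (simp add: sum_distrib_left sum_lessThan_telescope)
  also have "s N - s 0 = 0"
  proof -
    have "real j * real N * pi / real N = real j * pi"
      using assms by simp
    then show ?thesis
      by (simp add: s_def)
  qed
  finally show ?thesis
    using \<open>sin a > 0\<close> by (metis mult_eq_0_iff less_irrefl zero_neq_numeral)
qed

lemma sum_cos_cheb_nodes:
  assumes "j \<noteq> 0" "\<bar>j\<bar> < 2 * int N"
  shows "(\<Sum>l<N. cos (of_int j * cheb_node N l)) = 0"
proof -
  have "cos (of_int j * t) = cos (real (nat \<bar>j\<bar>) * t)" for t
    by (simp add: abs_if)
  then show ?thesis
    using assms sum_cos_cheb_nodes_nat[of "nat \<bar>j\<bar>" N] by simp
qed

lemma sum_cos_mult_cos_cheb_nodes:
  assumes "m < N" "n < N"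
  shows "(\<Sum>l<N. cos (real m * cheb_node N l) * cos (real n * cheb_node N l)) =
         (if m \<noteq> n then 0 else if m = 0 then real N else real N / 2)"
proof -
  have "cos (real m * t) * cos (real n * t) =
      (cos (of_int (int m - int n) * t) + cos (of_int (int m + int n) * t)) / 2" for t
    by (simp add: cos_times_cos algebra_simps)
  then have "(\<Sum>l<N. cos (real m * cheb_node N l) * cos (real n * cheb_node N l)) =
      ((\<Sum>l<N. cos (of_int (int m - int n) * cheb_node N l)) +
       (\<Sum>l<N. cos (of_int (int m + int n) * cheb_node N l))) / 2"
    by (simp only: sum.distrib[symmetric] sum_divide_distrib)
  moreover have "(\<Sum>l<N. cos (of_int (int m - int n) * cheb_node N l)) = (if m = n then real N else 0)"
    using assms sum_cos_cheb_nodes[of "int m - int n" N] by auto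
  moreover have "(\<Sum>l<N. cos (of_int (int m + int n) * cheb_node N l)) =
      (if m = 0 \<and> n = 0 then real N else 0)"
    using assms sum_cos_cheb_nodes[of "int m + int n" N] by auto
  ultimately show ?thesis
    by auto
qed

lemma sum_square_cheb_coeffs_le:
  assumes P: "P = (\<Sum>m\<le>d. smult (c m) (cheb_poly m))"
    and bounded: "\<And>x. \<bar>x\<bar> \<le> 1 \<Longrightarrow> \<bar>poly P x\<bar> \<le> 1"
  shows "(\<Sum>m\<le>d. (c m)\<^sup>2) \<le> 2"
proof -
  define N where "N = Suc d"
  define \<theta> where "\<theta> = cheb_node N"
  have poly_P: "poly P (cos (\<theta> l)) = (\<Sum>m\<le>d. c m * cos (real m * \<theta> l))" for l
    unfolding P by (simp add: poly_sum poly_cheb_poly_cos)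
  \<comment> \<open>discrete Parseval identity at the \<open>N\<close> Chebyshev nodes\<close>
  have "(\<Sum>l<N. (poly P (cos (\<theta> l)))\<^sup>2) =
      (\<Sum>l<N. \<Sum>m\<le>d. \<Sum>n\<le>d. c m * c n * (cos (real m * \<theta> l) * cos (real n * \<theta> l)))"
    unfolding poly_P power2_eq_square sum_product by (simp add: mult_ac)
  also have "\<dots> =
      (\<Sum>m\<le>d. \<Sum>n\<le>d. c m * c n * (\<Sum>l<N. cos (real m * \<theta> l) * cos (real n * \<theta> l)))"
    unfolding sum_distrib_left by (subst sum.swap) (simp add: sum.swap[of _ "{..<N}"])
  also have "\<dots> = (\<Sum>m\<le>d. (c m)\<^sup>2 * (if m = 0 then real N else real N / 2))"
  proof (intro sum.cong refl)
    fix m assume "m \<in> {..d}"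
    have orth: "(\<Sum>l<N. cos (real m * \<theta> l) * cos (real n * \<theta> l)) =
        (if m \<noteq> n then 0 else if m = 0 then real N else real N / 2)" if "n \<le> d" for n
      unfolding \<theta>_def using \<open>m \<in> {..d}\<close> that
      by (intro sum_cos_mult_cos_cheb_nodes) (auto simp: N_def)
    have "(\<Sum>n\<le>d. c m * c n * (\<Sum>l<N. cos (real m * \<theta> l) * cos (real n * \<theta> l))) =
        (\<Sum>n\<le>d. if m = n then (c m)\<^sup>2 * (if m = 0 then real N else real N / 2) else 0)"
      by (intro sum.cong refl) (auto simp: orth power2_eq_square)
    also have "\<dots> = (c m)\<^sup>2 * (if m = 0 then real N else real N / 2)"
      using \<open>m \<in> {..d}\<close> by simp
    finally show "(\<Sum>n\<le>d. c m * c n * (\<Sum>l<N. cos (real m * \<theta> l) * cos (real n * \<theta> l))) =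
        (c m)\<^sup>2 * (if m = 0 then real N else real N / 2)" .
  qed
  also have "\<dots> \<ge> (\<Sum>m\<le>d. (c m)\<^sup>2) * (real N / 2)"
    unfolding sum_distrib_right by (intro sum_mono) auto
  moreover have "(\<Sum>l<N. (poly P (cos (\<theta> l)))\<^sup>2) \<le> real N"
    using sum_mono[of "{..<N}" "\<lambda>l. (poly P (cos (\<theta> l)))\<^sup>2" "\<lambda>_. 1"]
    by (simp add: abs_square_le_1 bounded)
  ultimately have "(\<Sum>m\<le>d. (c m)\<^sup>2) * real N \<le> 2 * real N"
    by linarith
  then show ?thesis
    by (rule mult_right_le_imp_le) (simp add: N_def)
qed

lemma sum_abs_le_sqrt_of_sum_squares_le:
  assumes "(\<Sum>m\<le>d. (c m)\<^sup>2) \<le> (B::real)"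
  shows "(\<Sum>m\<le>d. \<bar>c m\<bar>) \<le> sqrt (B * (real d + 1))"
proof (rule real_le_rsqrt)
  have "(\<Sum>m\<le>d. \<bar>c m\<bar>)\<^sup>2 \<le> (\<Sum>m\<le>d. (c m)\<^sup>2) * real (card {..d})"
    using sum_squared_le_sum_of_squares[of "\<lambda>m. \<bar>c m\<bar>" "{..d}"] by simp
  also have "\<dots> = (\<Sum>m\<le>d. (c m)\<^sup>2) * (real d + 1)"
    by simp
  also have "\<dots> \<le> B * (real d + 1)"
    using assms by (intro mult_right_mono) auto
  finally show "(\<Sum>m\<le>d. \<bar>c m\<bar>)\<^sup>2 \<le> B * (real d + 1)" .
qed

definition cheb_energy :: "real \<Rightarrow> real \<Rightarrow> real \<Rightarrow> real" where
  "cheb_energy x a b = a\<^sup>2 - 2 * x * a * b + b\<^sup>2"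

lemma cheb_energy_eq: "cheb_energy x a b = (a - x * b)\<^sup>2 + (1 - x\<^sup>2) * b\<^sup>2"
  unfolding cheb_energy_def by (simp add: power2_eq_square algebra_simps)

lemma cheb_energy_rotate: "cheb_energy x (2 * x * a - b) a = cheb_energy x a b"
  unfolding cheb_energy_def by (simp add: power2_eq_square algebra_simps)

lemma cheb_energy_nonneg: "\<bar>x\<bar> \<le> 1 \<Longrightarrow> 0 \<le> cheb_energy x a b"
  unfolding cheb_energy_eq by (simp add: abs_square_le_1)

lemma abs_le_sqrt_cheb_energy:
  assumes "\<bar>x\<bar> \<le> 1/2"
  shows "\<bar>b\<bar> \<le> 2 * sqrt (cheb_energy x a b)"
proof -
  have "1/4 \<le> 1 - x\<^sup>2"
    using assms abs_le_square_iff[of x "1/2"] by (simp add: power_divide)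
  then have "b\<^sup>2 \<le> 4 * ((1 - x\<^sup>2) * b\<^sup>2)"
    using mult_right_mono[of "1/4" "1 - x\<^sup>2" "b\<^sup>2"] by simp
  also have "\<dots> \<le> 4 * cheb_energy x a b"
    by (simp add: cheb_energy_eq)
  finally have "sqrt (b\<^sup>2) \<le> sqrt (4 * cheb_energy x a b)"
    by (rule real_sqrt_le_mono)
  then show ?thesis
    by (simp add: real_sqrt_mult)
qed

lemma sqrt_cheb_energy_add_le:
  assumes "\<bar>x\<bar> \<le> 1"
  shows "sqrt (cheb_energy x (a + f) b) \<le> sqrt (cheb_energy x a b) + \<bar>f\<bar>"
proof (rule real_le_lsqrt)
  have "\<bar>a - x * b\<bar> \<le> sqrt (cheb_energy x a b)"
    using assms by (intro real_le_rsqrt) (simp add: cheb_energy_eq abs_square_le_1)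
  then have "f * (a - x * b) \<le> \<bar>f\<bar> * sqrt (cheb_energy x a b)"
    by (metis abs_ge_self abs_ge_zero abs_mult mult_left_mono order_trans)
  then show "cheb_energy x (a + f) b \<le> (sqrt (cheb_energy x a b) + \<bar>f\<bar>)\<^sup>2"
    using cheb_energy_nonneg[OF assms, of a b]
    by (simp add: cheb_energy_def power2_eq_square algebra_simps)
qed (use cheb_energy_nonneg[OF assms] in auto)

lemma perturbed_cheb_recurrence_bound:
  assumes x: "\<bar>x\<bar> \<le> 1/2"
    and rec: "\<And>m. u (Suc (Suc m)) = 2 * x * u (Suc m) - u m + f m"
  shows "\<bar>u m\<bar> \<le> 2 * (sqrt (cheb_energy x (u 1) (u 0)) + (\<Sum>j<m. \<bar>f j\<bar>))"
proof -
  have "sqrt (cheb_energy x (u (Suc m)) (u m)) \<le> sqrt (cheb_energy x (u 1) (u 0)) + (\<Sum>j<m. \<bar>f j\<bar>)"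
  proof (induction m)
    case (Suc m)
    have "sqrt (cheb_energy x (u (Suc (Suc m))) (u (Suc m))) \<le>
        sqrt (cheb_energy x (2 * x * u (Suc m) - u m) (u (Suc m))) + \<bar>f m\<bar>"
      unfolding rec using x by (intro sqrt_cheb_energy_add_le) auto
    also have "\<dots> = sqrt (cheb_energy x (u (Suc m)) (u m)) + \<bar>f m\<bar>"
      by (simp add: cheb_energy_rotate)
    finally show ?case
      using Suc.IH by simp
  qed simp
  then show ?thesis
    using abs_le_sqrt_cheb_energy[OF x, of "u m" "u (Suc m)"] by argo
qed

lemma poly_high_part_cheb_poly_Suc_Suc:
  "poly (high_part (Suc k) (cheb_poly (Suc (Suc m)))) x =
     2 * x * poly (high_part (Suc k) (cheb_poly (Suc m))) x
     - poly (high_part (Suc k) (cheb_poly m)) x + 2 * coeff (cheb_poly (Suc m)) k"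
  by (simp add: high_part_diff high_part_smult poly_high_part_step[of k] algebra_simps)

lemma high_part_Suc_cheb_poly_0: "high_part (Suc k) (cheb_poly 0) = 0"
  by (rule poly_eqI) simp

lemma high_part_Suc_cheb_poly_1: "high_part (Suc k) (cheb_poly 1) = (if k = 0 then 1 else 0)"
  by (rule poly_eqI) (simp add: coeff_pCons split: nat.split)

fun cheb_hp_bound_near_0 :: "nat \<Rightarrow> real" where
  "cheb_hp_bound_near_0 0 = 1"
| "cheb_hp_bound_near_0 (Suc k) = 2 + 4 * cheb_hp_bound_near_0 k"

lemma cheb_hp_bound_near_0_nonneg: "0 \<le> cheb_hp_bound_near_0 k"
  by (induction k) simp_all

lemma abs_poly_high_part_cheb_poly_near_0:
  "\<bar>x\<bar> \<le> 1/2 \<Longrightarrow>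
     \<bar>poly (high_part k (cheb_poly m)) x\<bar> \<le> cheb_hp_bound_near_0 k * (real m + 1) ^ k"
proof (induction k arbitrary: m x)
  case 0
  then show ?case
    by (simp add: abs_poly_cheb_poly_le_1)
next
  case (Suc k)
  define B where "B = cheb_hp_bound_near_0 k"
  define u where "u m = poly (high_part (Suc k) (cheb_poly m)) x" for m
  define f where "f m = 2 * coeff (cheb_poly (Suc m)) k" for m
  have "\<bar>f j\<bar> \<le> 2 * B * (real m + 1) ^ k" if "j < m" for j
  proof -
    have "\<bar>f j\<bar> \<le> 2 * B * (real (Suc j) + 1) ^ k"
      using Suc.IH[of 0 "Suc j"] by (simp add: f_def B_def poly_high_part_0)
    also have "\<dots> \<le> 2 * B * (real m + 1) ^ k"
      using that cheb_hp_bound_near_0_nonneg[of k]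
      by (intro mult_left_mono power_mono) (auto simp: B_def)
    finally show ?thesis .
  qed
  then have "(\<Sum>j<m. \<bar>f j\<bar>) \<le> real m * (2 * B * (real m + 1) ^ k)"
    using sum_bounded_above[of "{..<m}" "\<lambda>j. \<bar>f j\<bar>"] by simp
  moreover have "sqrt (cheb_energy x (u 1) (u 0)) \<le> 1"
    unfolding u_def high_part_Suc_cheb_poly_0 high_part_Suc_cheb_poly_1
    by (simp add: cheb_energy_def)
  moreover have "\<bar>u m\<bar> \<le> 2 * (sqrt (cheb_energy x (u 1) (u 0)) + (\<Sum>j<m. \<bar>f j\<bar>))"
    by (rule perturbed_cheb_recurrence_bound[OF Suc.prems])
      (simp only: u_def f_def poly_high_part_cheb_poly_Suc_Suc)
  ultimately have "\<bar>u m\<bar> \<le> 2 + 4 * B * (real m * (real m + 1) ^ k)"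
    by argo
  also have "\<dots> \<le> (2 + 4 * B) * (real m + 1) ^ Suc k"
  proof -
    have "1 \<le> (real m + 1) ^ Suc k"
      by (rule one_le_power) simp
    moreover have "4 * B * (real m * (real m + 1) ^ k) \<le> 4 * B * (real m + 1) ^ Suc k"
      using cheb_hp_bound_near_0_nonneg[of k] by (intro mult_left_mono) (auto simp: B_def)
    ultimately show ?thesis
      by (simp add: algebra_simps)
  qed
  finally show ?case
    by (simp add: u_def B_def)
qed

lemma abs_poly_high_part_le_away_from_0:
  assumes x: "1/2 \<le> \<bar>x\<bar>" "\<bar>x\<bar> \<le> 1" and P: "\<bar>poly P x\<bar> \<le> 1"
  shows "\<bar>poly (high_part k P) x\<bar> \<le> 2 ^ k * (1 + (\<Sum>j<k. \<bar>coeff P j\<bar>))"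
proof -
  have term_le: "\<bar>coeff P j * x ^ j\<bar> \<le> \<bar>coeff P j\<bar>" for j
    using x by (simp add: abs_mult power_abs power_le_one mult_left_le)
  have "\<bar>\<Sum>j<k. coeff P j * x ^ j\<bar> \<le> (\<Sum>j<k. \<bar>coeff P j\<bar>)"
    by (rule order_trans[OF sum_abs sum_mono]) (rule term_le)
  moreover have "\<bar>x\<bar> ^ k * \<bar>poly (high_part k P) x\<bar> = \<bar>poly P x - (\<Sum>j<k. coeff P j * x ^ j)\<bar>"
    using poly_eq_low_part_plus_high_part[of P x k] by (simp add: abs_mult power_abs)
  ultimately have "\<bar>x\<bar> ^ k * \<bar>poly (high_part k P) x\<bar> \<le> 1 + (\<Sum>j<k. \<bar>coeff P j\<bar>)"
    using P abs_triangle_ineq4[of "poly P x" "\<Sum>j<k. coeff P j * x ^ j"] by linarith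
  moreover have "(1/2) ^ k * \<bar>poly (high_part k P) x\<bar> \<le> \<bar>x\<bar> ^ k * \<bar>poly (high_part k P) x\<bar>"
    using x by (intro mult_right_mono power_mono) auto
  ultimately have "\<bar>poly (high_part k P) x\<bar> / 2 ^ k \<le> 1 + (\<Sum>j<k. \<bar>coeff P j\<bar>)"
    by (simp add: power_one_over)
  then show ?thesis
    by (simp add: field_simps)
qed

definition cheb_hp_bound :: "nat \<Rightarrow> real" where
  "cheb_hp_bound k = 2 ^ k * (1 + (\<Sum>j\<le>k. cheb_hp_bound_near_0 j))"

lemma cheb_hp_bound_nonneg: "0 \<le> cheb_hp_bound k"
  by (simp add: cheb_hp_bound_def sum_nonneg cheb_hp_bound_near_0_nonneg)

lemma abs_poly_high_part_cheb_poly: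
  assumes x: "\<bar>x\<bar> \<le> 1"
  shows "\<bar>poly (high_part k (cheb_poly m)) x\<bar> \<le> cheb_hp_bound k * (real m + 1) ^ k"
proof -
  let ?S = "\<Sum>j\<le>k. cheb_hp_bound_near_0 j"
  have "1 + ?S \<le> 2 ^ k * (1 + ?S)"
    using sum_nonneg[of "{..k}" cheb_hp_bound_near_0] cheb_hp_bound_near_0_nonneg
    by (simp add: mult_le_cancel_right1)
  then have S_le: "?S \<le> cheb_hp_bound k"
    unfolding cheb_hp_bound_def by linarith
  consider "\<bar>x\<bar> \<le> 1/2" | "1/2 \<le> \<bar>x\<bar>"
    by linarith
  then show ?thesis
  proof cases
    case 1
    have "cheb_hp_bound_near_0 k \<le> ?S"
      by (rule member_le_sum) (simp_all add: cheb_hp_bound_near_0_nonneg)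
    with S_le have "cheb_hp_bound_near_0 k \<le> cheb_hp_bound k"
      by linarith
    then show ?thesis
      using abs_poly_high_part_cheb_poly_near_0[OF 1, of k m]
      by (meson order_trans mult_right_mono zero_le_power of_nat_0_le_iff add_nonneg_nonneg zero_le_one)
  next
    case 2
    have coeff_le: "\<bar>coeff (cheb_poly m) j\<bar> \<le> cheb_hp_bound_near_0 j * (real m + 1) ^ k"
      if "j < k" for j
    proof -
      have "\<bar>coeff (cheb_poly m) j\<bar> \<le> cheb_hp_bound_near_0 j * (real m + 1) ^ j"
        using abs_poly_high_part_cheb_poly_near_0[of 0 j m] by (simp add: poly_high_part_0)
      also have "\<dots> \<le> cheb_hp_bound_near_0 j * (real m + 1) ^ k"
        using that cheb_hp_bound_near_0_nonneg[of j] by (intro mult_left_mono power_increasing) auto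
      finally show ?thesis .
    qed
    have "1 + (\<Sum>j<k. \<bar>coeff (cheb_poly m) j\<bar>) \<le> (real m + 1) ^ k + ?S * (real m + 1) ^ k"
    proof -
      have "(\<Sum>j<k. \<bar>coeff (cheb_poly m) j\<bar>) \<le> (\<Sum>j<k. cheb_hp_bound_near_0 j * (real m + 1) ^ k)"
        by (intro sum_mono) (simp add: coeff_le)
      also have "\<dots> \<le> (\<Sum>j\<le>k. cheb_hp_bound_near_0 j * (real m + 1) ^ k)"
        by (intro sum_mono2) (auto simp: cheb_hp_bound_near_0_nonneg)
      also have "\<dots> = ?S * (real m + 1) ^ k"
        by (simp add: sum_distrib_right)
      finally have "(\<Sum>j<k. \<bar>coeff (cheb_poly m) j\<bar>) \<le> ?S * (real m + 1) ^ k" .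
      moreover have "1 \<le> (real m + 1) ^ k"
        by (rule one_le_power) simp
      ultimately show ?thesis
        by linarith
    qed
    also have "\<dots> = (1 + ?S) * (real m + 1) ^ k"
      by (simp add: algebra_simps)
    finally have "2 ^ k * (1 + (\<Sum>j<k. \<bar>coeff (cheb_poly m) j\<bar>)) \<le> cheb_hp_bound k * (real m + 1) ^ k"
      unfolding cheb_hp_bound_def mult.assoc by (rule mult_left_mono) simp
    then show ?thesis
      using abs_poly_high_part_le_away_from_0[OF 2 x abs_poly_cheb_poly_le_1[OF x, of m], of k]
      by linarith
  qed
qed

lemma sup_norm_11_le_iff:
  assumes "continuous_on {-1..1} f"
  shows "sup_norm_11 f \<le> M \<longleftrightarrow> (\<forall>x\<in>{-1..1}. \<bar>f x\<bar> \<le> M)"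
proof -
  have "bdd_above ((\<lambda>x. \<bar>f x\<bar>) ` {-1..1})"
    using assms by (intro bounded_imp_bdd_above compact_imp_bounded compact_continuous_image
        continuous_intros) auto
  then show ?thesis
    unfolding sup_norm_11_def by (subst cSUP_le_iff) auto
qed

lemma abs_poly_high_part_cheb_sum:
  assumes "\<bar>x\<bar> \<le> 1"
  shows "\<bar>poly (high_part k (\<Sum>m\<le>d. smult (c m) (cheb_poly m))) x\<bar> \<le>
    cheb_hp_bound k * (real d + 1) ^ k * (\<Sum>m\<le>d. \<bar>c m\<bar>)"
proof -
  have "\<bar>poly (high_part k (\<Sum>m\<le>d. smult (c m) (cheb_poly m))) x\<bar> \<le>
      (\<Sum>m\<le>d. \<bar>c m\<bar> * \<bar>poly (high_part k (cheb_poly m)) x\<bar>)"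
    by (simp add: high_part_sum high_part_smult poly_sum order_trans[OF sum_abs] abs_mult)
  also have "\<dots> \<le> (\<Sum>m\<le>d. \<bar>c m\<bar> * (cheb_hp_bound k * (real d + 1) ^ k))"
  proof (intro sum_mono mult_left_mono)
    fix m assume "m \<in> {..d}"
    with cheb_hp_bound_nonneg[of k] have "cheb_hp_bound k * (real m + 1) ^ k \<le> cheb_hp_bound k * (real d + 1) ^ k"
      by (intro mult_left_mono power_mono) auto
    then show "\<bar>poly (high_part k (cheb_poly m)) x\<bar> \<le> cheb_hp_bound k * (real d + 1) ^ k"
      using abs_poly_high_part_cheb_poly[OF assms, of k m] by linarith
  qed simp
  also have "\<dots> = cheb_hp_bound k * (real d + 1) ^ k * (\<Sum>m\<le>d. \<bar>c m\<bar>)"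
    by (simp add: sum_distrib_left mult_ac)
  finally show ?thesis .
qed

lemma sum_abs_cheb_coeffs_le:
  assumes P: "P = (\<Sum>m\<le>d. smult (c m) (cheb_poly m))"
    and bounded: "\<And>x. \<bar>x\<bar> \<le> 1 \<Longrightarrow> \<bar>poly P x\<bar> \<le> 1"
    and d: "1 \<le> real d"
  shows "(\<Sum>m\<le>d. \<bar>c m\<bar>) \<le> 2 * sqrt (real d)"
proof -
  have "(\<Sum>m\<le>d. \<bar>c m\<bar>) \<le> sqrt (2 * (real d + 1))"
    using sum_square_cheb_coeffs_le[OF P bounded] by (rule sum_abs_le_sqrt_of_sum_squares_le)
  also have "\<dots> \<le> 2 * sqrt (real d)"
    using d real_sqrt_le_mono[of "2 * (real d + 1)" "4 * real d"] by (simp add: real_sqrt_mult)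
  finally show ?thesis .
qed

lemma abs_poly_high_part_le:
  assumes "degree P \<le> d" "1 \<le> real d"
    and bounded: "\<And>x. \<bar>x\<bar> \<le> 1 \<Longrightarrow> \<bar>poly P x\<bar> \<le> 1"
    and x: "\<bar>x\<bar> \<le> 1"
  shows "\<bar>poly (high_part k P) x\<bar> \<le> 2 ^ Suc k * cheb_hp_bound k * real d ^ k * sqrt (real d)"
proof -
  obtain c where P: "P = (\<Sum>m\<le>d. smult (c m) (cheb_poly m))"
    using cheb_poly_expansion[OF \<open>degree P \<le> d\<close>] by blast
  have "(real d + 1) ^ k \<le> (2 * real d) ^ k"
    using \<open>1 \<le> real d\<close> by (intro power_mono) auto
  with sum_abs_cheb_coeffs_le[OF P bounded \<open>1 \<le> real d\<close>] cheb_hp_bound_nonneg[of k]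
  have "cheb_hp_bound k * (real d + 1) ^ k * (\<Sum>m\<le>d. \<bar>c m\<bar>) \<le>
      cheb_hp_bound k * (2 * real d) ^ k * (2 * sqrt (real d))"
    by (intro mult_mono mult_left_mono) auto
  also have "\<dots> = 2 ^ Suc k * cheb_hp_bound k * real d ^ k * sqrt (real d)"
    by (simp add: power_mult_distrib mult_ac)
  finally show ?thesis
    using abs_poly_high_part_cheb_sum[OF x, where k = k and d = d and c = c] unfolding P by linarith
qed

theorem mainTheorem5:
  fixes k :: nat
  assumes "k \<ge> 1"
  shows "\<exists>C::real. \<forall>(d::nat) (P::real poly).
           d \<ge> k \<longrightarrow> degree P \<le> d \<longrightarrow> sup_norm_11 (poly P) \<le> 1 \<longrightarrow>
           sup_norm_11 (poly (high_part k P)) \<le> C * real d ^ k * sqrt (real d)"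
proof (intro exI allI impI)
  fix d :: nat and P :: "real poly"
  assume "d \<ge> k" "degree P \<le> d" "sup_norm_11 (poly P) \<le> 1"
  note sup_norm_poly_le_iff = sup_norm_11_le_iff[OF continuous_on_poly[OF continuous_on_id]]
  have "1 \<le> real d"
    using assms \<open>d \<ge> k\<close> by simp
  moreover have "\<bar>poly P x\<bar> \<le> 1" if "\<bar>x\<bar> \<le> 1" for x
    using \<open>sup_norm_11 (poly P) \<le> 1\<close> that by (auto simp: sup_norm_poly_le_iff abs_le_iff)
  ultimately show "sup_norm_11 (poly (high_part k P)) \<le>
      2 ^ Suc k * cheb_hp_bound k * real d ^ k * sqrt (real d)"
    using abs_poly_high_part_le[OF \<open>degree P \<le> d\<close>] by (auto simp: sup_norm_poly_le_iff)
qed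

end
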